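(* Let a product two-action game with $m$ players be given, and let $\pi\in\mathrm{Der}_m$. Then the set $EC(\pi)$ consists of exactly one point, namely $\underline\gamma$ with $\gamma^j=a^{\pi(j)}_j$ for all $j\in\mathcal A$, and this point is a Nash equilibrium (with all $\gamma^j\in(0,1)$). In particular the game has at least $!m$ Nash equilibria in the open cube $(0,1)^m$.
   Context: Fix an integer $m\ge 1$ and $\mathcal A=\{1,\dots,m\}$. A two-action game is a finite game in normal form with player set $\mathcal A$ in which each player $i$ has exactly two pure strategies $s^i_0,s^i_1$, together with utility functions $U^i:S\to\mathbb R$, where $S=\prod_{i\in\mathcal A}\{s^i_0,s^i_1\}$. A mixed strategy combination is identified with $\underline\gamma=(\gamma^1,\dots,\gamma^m)\in[0,1]^m$, where $\gamma^i$ is the probability with which player $i$ plays $s^i_1$. The expected utility $V^i$ is the multilinear extension $V^i(\underline\gamma)=\sum_{(j_1,\dots,j_m)\in\{0,1\}^m}\prod_{k=1}^m p_k(j_k)\,U^i(s^1_{j_1},\dots,s^m_{j_m})$ with $p_k(1)=\gamma^k$, $p_k(0)=1-\gamma^k$. Write $\underline\gamma^{-i}=(\gamma^j)_{j\ne i}$ and $\lambda^i(\underline\gamma^{-i}):=V^i(\underline\gamma)|_{\gamma^i=1}-V^i(\underline\gamma)|_{\gamma^i=0}$. A Nash equilibrium is a point $\underline\gamma\in[0,1]^m$ such that for every $i$: $\lambda^i(\underline\gamma^{-i})=0$ if $0<\gamma^i<1$; $\lambda^i(\underline\gamma^{-i})\le 0$ if $\gamma^i=0$; $\lambda^i(\underline\gamma^{-i})\ge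 0$ if $\gamma^i=1$. For $\underline\gamma$ put $L_0(\underline\gamma)=\{i:\gamma^i=0\}$, $L_1(\underline\gamma)=\{i:\gamma^i=1\}$, $L(\underline\gamma)=L_0(\underline\gamma)\cup L_1(\underline\gamma)$. A two-action game is a product two-action game if there exist $\underline v=(v_1,\dots,v_m)\in\{0,1\}^m$ and numbers $a^i_j\in(0,1)$ for $i,j\in\mathcal A$, $i\ne j$, with $a^{i_1}_j\neq a^{i_2}_j$ whenever $i_1\neq i_2$ and both differ from $j$, such that $\lambda^i(\underline\gamma^{-i})=(-1)^{v_i}\prod_{j\in\mathcal A\setminus\{i\}}(\gamma^j-a^i_j)$ for every $i\in\mathcal A$. For $\pi\in S_m$, $F(\pi)=\{i\in\mathcal A:\pi(i)=i\}$; $\mathrm{Der}_m$ is the set of $\pi\in S_m$ with $F(\pi)=\emptyset$; $!m=|\mathrm{Der}_m|$. $EC(\pi):=\{\underline\gamma\in[0,1]^m \mid L(\underline\gamma)=F(\pi),\ \gamma^j=a^{\pi(j)}_j \text{ for all } j\notin F(\pi)\}$. *)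

theory Defs
  imports "HOL-Analysis.Analysis" "HOL-Combinatorics.Permutations"
begin

text \<open>A pure strategy of player i is a bool
 (False = s^i_0, True = s^i_1); a pure profile is an element of
 PiE {1..m} (\<lambda>_. UNIV).
 A mixed profile gamma is an element of the cube PiE {1..m} (\<lambda>_. {0..1}),
 gamma i = probability that player i plays s^i_1.\<close>

definition players :: "nat \<Rightarrow> nat set" where
  "players m = {1..m}"

definition cube :: "nat \<Rightarrow> (nat \<Rightarrow> real) set" where
  "cube m = PiE (players m) (\<lambda>_. {0..1})"

definition pure_profiles :: "nat \<Rightarrow> (nat \<Rightarrow> bool) set" where
  "pure_profiles m = PiE (players m) (\<lambda>_. UNIV)"

definition prob_of :: "real \<Rightarrow> bool \<Rightarrow> real" where
  "prob_of g b = (if b then g else 1 - g)"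

definition V :: "nat \<Rightarrow> (nat \<Rightarrow> (nat \<Rightarrow> bool) \<Rightarrow> real) \<Rightarrow> nat \<Rightarrow> (nat \<Rightarrow> real) \<Rightarrow> real" where
  "V m U i \<gamma> = (\<Sum>s\<in>pure_profiles m. (\<Prod>k\<in>players m. prob_of (\<gamma> k) (s k)) * U i s)"

definition lam :: "nat \<Rightarrow> (nat \<Rightarrow> (nat \<Rightarrow> bool) \<Rightarrow> real) \<Rightarrow> nat \<Rightarrow> (nat \<Rightarrow> real) \<Rightarrow> real" where
  "lam m U i \<gamma> = V m U i (\<gamma>(i := 1)) - V m U i (\<gamma>(i := 0))"

definition nash :: "nat \<Rightarrow> (nat \<Rightarrow> (nat \<Rightarrow> bool) \<Rightarrow> real) \<Rightarrow> (nat \<Rightarrow> real) \<Rightarrow> bool" where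
  "nash m U \<gamma> \<longleftrightarrow> \<gamma> \<in> cube m \<and>
     (\<forall>i\<in>players m.
        (0 < \<gamma> i \<and> \<gamma> i < 1 \<longrightarrow> lam m U i \<gamma> = 0) \<and>
        (\<gamma> i = 0 \<longrightarrow> lam m U i \<gamma> \<le> 0) \<and>
        (\<gamma> i = 1 \<longrightarrow> lam m U i \<gamma> \<ge> 0))"

text \<open>Product two-action game with data v, a (a i j = a^i_j).\<close>
definition product_game ::
  "nat \<Rightarrow> (nat \<Rightarrow> (nat \<Rightarrow> bool) \<Rightarrow> real) \<Rightarrow> (nat \<Rightarrow> nat) \<Rightarrow> (nat \<Rightarrow> nat \<Rightarrow> real) \<Rightarrow> bool" where
  "product_game m U v a \<longleftrightarrow>
     (\<forall>i\<in>players m. v i \<in> {0, 1}) \<and>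
     (\<forall>i\<in>players m. \<forall>j\<in>players m. i \<noteq> j \<longrightarrow> 0 < a i j \<and> a i j < 1) \<and>
     (\<forall>j\<in>players m. \<forall>i1\<in>players m. \<forall>i2\<in>players m.
        i1 \<noteq> i2 \<and> i1 \<noteq> j \<and> i2 \<noteq> j \<longrightarrow> a i1 j \<noteq> a i2 j) \<and>
     (\<forall>i\<in>players m. \<forall>\<gamma>\<in>cube m.
        lam m U i \<gamma> = (-1) ^ v i * (\<Prod>j\<in>players m - {i}. \<gamma> j - a i j))"

definition Fix :: "nat \<Rightarrow> (nat \<Rightarrow> nat) \<Rightarrow> nat set" where
  "Fix m \<pi> = {i\<in>players m. \<pi> i = i}"

definition Der :: "nat \<Rightarrow> (nat \<Rightarrow> nat) set" where
  "Der m = {\<pi>. \<pi> permutes players m \<and> Fix m \<pi> = {}}"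

definition L0 :: "nat \<Rightarrow> (nat \<Rightarrow> real) \<Rightarrow> nat set" where
  "L0 m \<gamma> = {i\<in>players m. \<gamma> i = 0}"

definition L1 :: "nat \<Rightarrow> (nat \<Rightarrow> real) \<Rightarrow> nat set" where
  "L1 m \<gamma> = {i\<in>players m. \<gamma> i = 1}"

definition Lset :: "nat \<Rightarrow> (nat \<Rightarrow> real) \<Rightarrow> nat set" where
  "Lset m \<gamma> = L0 m \<gamma> \<union> L1 m \<gamma>"

definition EC :: "nat \<Rightarrow> (nat \<Rightarrow> nat \<Rightarrow> real) \<Rightarrow> (nat \<Rightarrow> nat) \<Rightarrow> (nat \<Rightarrow> real) set" where
  "EC m a \<pi> = {\<gamma>\<in>cube m. Lset m \<gamma> = Fix m \<pi> \<and>
                  (\<forall>j\<in>players m - Fix m \<pi>. \<gamma> j = a (\<pi> j) j)}"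

end

theory Submission
  imports Defs
begin

text \<open>For a derangement \<pi>, every player i has a preimage j = inv \<pi> i \<noteq> i; at the
  point with coordinate a i j in position j the factor (\<gamma> j - a i j) of the payoff
  difference of player i vanishes, so every player is indifferent and this interior point is
  an equilibrium. Distinct derangements give distinct points, because a i j determines i
  when j is fixed.\<close>

definition derangement_profile :: "nat \<Rightarrow> (nat \<Rightarrow> nat \<Rightarrow> real) \<Rightarrow> (nat \<Rightarrow> nat) \<Rightarrow> nat \<Rightarrow> real" where
  "derangement_profile m a \<pi> = restrict (\<lambda>j. a (\<pi> j) j) (players m)"

lemma finite_players [simp]: "finite (players m)"
  by (simp add: players_def)

lemma Der_permutes: "\<pi> \<in> Der m \<Longrightarrow> \<pi> permutes players m"
  by (simp add: Der_def)

lemma Der_in_players: "\<pi> \<in> Der m \<Longrightarrow> j \<in> players m \<Longrightarrow> \<pi> j \<in> players m"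
  by (simp add: Der_permutes permutes_in_image)

lemma Der_no_fixpoint: "\<pi> \<in> Der m \<Longrightarrow> j \<in> players m \<Longrightarrow> \<pi> j \<noteq> j"
  by (auto simp: Der_def Fix_def)

lemma finite_Der: "finite (Der m)"
  by (rule finite_subset[of _ "{p. p permutes players m}"])
     (auto simp: Der_def intro: finite_permutations)

lemma product_game_coeff_bounds:
  assumes "product_game m U v a" "i \<in> players m" "j \<in> players m" "i \<noteq> j"
  shows "0 < a i j" "a i j < 1"
  using assms by (auto simp: product_game_def)

lemma product_game_coeff_inj:
  assumes "product_game m U v a" "a i1 j = a i2 j"
    and "i1 \<in> players m" "i2 \<in> players m" "j \<in> players m" "i1 \<noteq> j" "i2 \<noteq> j"
  shows "i1 = i2"
  using assms unfolding product_game_def by metis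

lemma derangement_profile_interior:
  assumes "product_game m U v a" "\<pi> \<in> Der m" "j \<in> players m"
  shows "0 < a (\<pi> j) j" "a (\<pi> j) j < 1"
  using product_game_coeff_bounds[OF assms(1) Der_in_players[OF assms(2,3)] assms(3)]
    Der_no_fixpoint[OF assms(2,3)] by auto

lemma derangement_profile_in_cube:
  assumes "product_game m U v a" "\<pi> \<in> Der m"
  shows "derangement_profile m a \<pi> \<in> cube m"
  using derangement_profile_interior[OF assms]
  by (auto simp: derangement_profile_def cube_def less_imp_le)

lemma EC_derangement:
  assumes "product_game m U v a" "\<pi> \<in> Der m"
  shows "EC m a \<pi> = {derangement_profile m a \<pi>}"
proof -
  let ?g = "derangement_profile m a \<pi>"
  have no_fix: "Fix m \<pi> = {}"
    using assms(2) by (simp add: Der_def)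
  have "Lset m ?g = {}"
    using derangement_profile_interior[OF assms]
    by (fastforce simp: Lset_def L0_def L1_def derangement_profile_def)
  then have "?g \<in> EC m a \<pi>"
    using derangement_profile_in_cube[OF assms] no_fix
    by (simp add: EC_def derangement_profile_def)
  moreover have "\<gamma> = ?g" if "\<gamma> \<in> EC m a \<pi>" for \<gamma>
  proof
    fix j
    have "\<gamma> \<in> cube m" "\<forall>j\<in>players m. \<gamma> j = a (\<pi> j) j"
      using that no_fix by (auto simp: EC_def)
    then show "\<gamma> j = ?g j"
      by (cases "j \<in> players m") (auto simp: derangement_profile_def cube_def)
  qed
  ultimately show ?thesis by blast
qed

lemma nash_if_indifferent:
  assumes "\<gamma> \<in> cube m" "\<And>i. i \<in> players m \<Longrightarrow> lam m U i \<gamma> = 0"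
  shows "nash m U \<gamma>"
  using assms by (simp add: nash_def)

lemma product_game_indifferent:
  assumes "product_game m U v a" "\<gamma> \<in> cube m" "i \<in> players m"
    and "j \<in> players m" "j \<noteq> i" "\<gamma> j = a i j"
  shows "lam m U i \<gamma> = 0"
proof -
  have "(\<Prod>k\<in>players m - {i}. \<gamma> k - a i k) = 0"
    using assms(4-6) by (intro prod_zero) auto
  then show ?thesis
    using assms(1-3) by (simp add: product_game_def)
qed

lemma nash_derangement_profile:
  assumes pg: "product_game m U v a" and der: "\<pi> \<in> Der m"
  shows "nash m U (derangement_profile m a \<pi>)"
proof (rule nash_if_indifferent[OF derangement_profile_in_cube[OF assms]])
  fix i assume i: "i \<in> players m"
  define j where "j = inv \<pi> i"
  have \<pi>_j: "\<pi> j = i"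
    unfolding j_def using Der_permutes[OF der] by (simp add: permutes_inverses(1))
  have j: "j \<in> players m"
    unfolding j_def using Der_permutes[OF der] i by (simp add: permutes_in_image permutes_inv)
  have "j \<noteq> i"
    using Der_no_fixpoint[OF der j] \<pi>_j by simp
  then show "lam m U i (derangement_profile m a \<pi>) = 0"
    using product_game_indifferent[OF pg derangement_profile_in_cube[OF assms] i j] j \<pi>_j
    by (simp add: derangement_profile_def)
qed

lemma inj_on_derangement_profile:
  assumes pg: "product_game m U v a"
  shows "inj_on (derangement_profile m a) (Der m)"
proof
  fix \<pi> \<sigma> assume \<pi>: "\<pi> \<in> Der m" and \<sigma>: "\<sigma> \<in> Der m"
    and eq: "derangement_profile m a \<pi> = derangement_profile m a \<sigma>"
  show "\<pi> = \<sigma>"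
  proof
    fix j show "\<pi> j = \<sigma> j"
    proof (cases "j \<in> players m")
      case True
      then have "a (\<pi> j) j = a (\<sigma> j) j"
        using fun_cong[OF eq, of j] by (simp add: derangement_profile_def)
      then show ?thesis
        by (rule product_game_coeff_inj[OF pg _ Der_in_players[OF \<pi> True]
              Der_in_players[OF \<sigma> True] True Der_no_fixpoint[OF \<pi> True]
              Der_no_fixpoint[OF \<sigma> True]])
    next
      case False
      then show ?thesis
        using Der_permutes[OF \<pi>] Der_permutes[OF \<sigma>] by (simp add: permutes_not_in)
    qed
  qed
qed

theorem theorem3p7:
  fixes m :: nat and U :: "nat \<Rightarrow> (nat \<Rightarrow> bool) \<Rightarrow> real"
    and v :: "nat \<Rightarrow> nat" and a :: "nat \<Rightarrow> nat \<Rightarrow> real"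
  assumes "m \<ge> 1"
    and "product_game m U v a"
  shows "(\<forall>\<pi>\<in>Der m.
            EC m a \<pi> = {restrict (\<lambda>j. a (\<pi> j) j) (players m)} \<and>
            nash m U (restrict (\<lambda>j. a (\<pi> j) j) (players m)) \<and>
            (\<forall>j\<in>players m. 0 < a (\<pi> j) j \<and> a (\<pi> j) j < 1))
       \<and> (\<exists>S. S \<subseteq> {\<gamma>. nash m U \<gamma> \<and> (\<forall>j\<in>players m. 0 < \<gamma> j \<and> \<gamma> j < 1)}
               \<and> finite S \<and> card S = card (Der m))"
proof -
  note pg = assms(2)
  let ?S = "derangement_profile m a ` Der m"
  have "?S \<subseteq> {\<gamma>. nash m U \<gamma> \<and> (\<forall>j\<in>players m. 0 < \<gamma> j \<and> \<gamma> j < 1)}"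
    using nash_derangement_profile[OF pg] derangement_profile_interior[OF pg]
    by (auto simp: derangement_profile_def)
  moreover have "card ?S = card (Der m)"
    using card_image[OF inj_on_derangement_profile[OF pg]] .
  ultimately have "\<exists>S. S \<subseteq> {\<gamma>. nash m U \<gamma> \<and> (\<forall>j\<in>players m. 0 < \<gamma> j \<and> \<gamma> j < 1)}
      \<and> finite S \<and> card S = card (Der m)"
    using finite_Der by blast
  then show ?thesis
    using EC_derangement[OF pg] nash_derangement_profile[OF pg]
      derangement_profile_interior[OF pg]
    by (simp add: derangement_profile_def)
qed

end
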